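(* Consider the following optical-network model. Each link $k$ has a set $A_k\subseteq\mathbb{Z}$ of available units. Each trait $t$ has a resource $\mathrm{RI}(t)$, a nonempty integer interval, and for each link $k$ the set $t\oplus k$ satisfies: every $t'\in t\oplus k$ has $\mathrm{RI}(t')$ a maximal integer interval contained in $\mathrm{RI}(t)\cap A_k$, and for every maximal integer interval $J\subseteq\mathrm{RI}(t)\cap A_k$ there is $t'\in t\oplus k$ with $\mathrm{RI}(t')=J$. Let $w=(n_a,n_b)$ be a search-graph vertex and $e$ an edge from $w$ to a vertex $x$ that appends a link $k$ from $n_a$ to a node $n_c\ne n_a$ to a route ending at $n_a$, so $x=(n_c,n_b)$; for a label $l=(t_1,t_2)$ at $w$ set $l\oplus e=\{(t,t_2):t\in t_1\oplus k\}$ if $n_a\ne n_b$, and $l\oplus e=\{(t,t_2):t\in t_1\oplus k\}\cup\{(t,t_1):t\in t_2\oplus k\}$ if $n_a=n_b$. Let $\mathrm{cost}$ be a real-valued function on labels such that for any labels $l_i,l_j$ at $w$: if $\mathrm{cost}(l_i)\le\mathrm{cost}(l_j)$ then $\mathrm{cost}(l')\le\mathrm{cost}(l)$ for all $l'\in l_i\oplus e$, $l\in l_j\oplus e$. Then for all labels $l_i,l_j$ at $w$: if $l_i\preceq'_w l_j$, then for every $l\in l_j\oplus e$ there exists $l'\in l_i\oplus e$ with $l'\preceq'_x l$.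
   Context: A trait describes a route in an optical network with its cost and the interval of contiguous units available along it; a label at vertex $(n,m)$ is a pair of traits of two link-disjoint routes ending at nodes $n$ and $m$. For labels at a vertex $v=(n,m)$, $\preceq'_v$ denotes $\preceq'_{\ne}$ if $n\ne m$ and $\preceq'_=$ if $n=m$, where: $(a,b)\preceq'_{\ne}(c,d)$ iff $\mathrm{cost}((a,b))\le\mathrm{cost}((c,d))$, $\mathrm{RI}(a)\supseteq\mathrm{RI}(c)$ and $\mathrm{RI}(b)\supseteq\mathrm{RI}(d)$; and $(a,b)\preceq'_=(c,d)$ iff $\mathrm{cost}((a,b))\le\mathrm{cost}((c,d))$ and either ($\mathrm{RI}(a)\supseteq\mathrm{RI}(c)$ and $\mathrm{RI}(b)\supseteq\mathrm{RI}(d)$) or ($\mathrm{RI}(a)\supseteq\mathrm{RI}(d)$ and $\mathrm{RI}(b)\supseteq\mathrm{RI}(c)$). *)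

theory Defs
  imports Complex_Main
begin

definition int_interval :: "int set \<Rightarrow> bool" where
  "int_interval J \<longleftrightarrow> (\<exists>lo hi. lo \<le> hi \<and> J = {lo..hi})"

definition max_interval_in :: "int set \<Rightarrow> int set \<Rightarrow> bool" where
  "max_interval_in J S \<longleftrightarrow> int_interval J \<and> J \<subseteq> S \<and>
     (\<forall>J'. int_interval J' \<and> J \<subseteq> J' \<and> J' \<subseteq> S \<longrightarrow> J' = J)"

definition dom_neq :: "('t \<times> 't \<Rightarrow> real) \<Rightarrow> ('t \<Rightarrow> int set) \<Rightarrow> 't \<times> 't \<Rightarrow> 't \<times> 't \<Rightarrow> bool" where
  "dom_neq cost RI l1 l2 \<longleftrightarrow> (case l1 of (a, b) \<Rightarrow> case l2 of (c, d) \<Rightarrow>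
     cost (a, b) \<le> cost (c, d) \<and> RI c \<subseteq> RI a \<and> RI d \<subseteq> RI b)"

definition dom_eq :: "('t \<times> 't \<Rightarrow> real) \<Rightarrow> ('t \<Rightarrow> int set) \<Rightarrow> 't \<times> 't \<Rightarrow> 't \<times> 't \<Rightarrow> bool" where
  "dom_eq cost RI l1 l2 \<longleftrightarrow> (case l1 of (a, b) \<Rightarrow> case l2 of (c, d) \<Rightarrow>
     cost (a, b) \<le> cost (c, d) \<and>
     ((RI c \<subseteq> RI a \<and> RI d \<subseteq> RI b) \<or> (RI d \<subseteq> RI a \<and> RI c \<subseteq> RI b)))"

definition dom_at :: "('t \<times> 't \<Rightarrow> real) \<Rightarrow> ('t \<Rightarrow> int set) \<Rightarrow> 'n \<times> 'n \<Rightarrow> 't \<times> 't \<Rightarrow> 't \<times> 't \<Rightarrow> bool" where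
  "dom_at cost RI v l1 l2 \<longleftrightarrow>
     (if fst v \<noteq> snd v then dom_neq cost RI l1 l2 else dom_eq cost RI l1 l2)"

definition label_ext :: "('t \<Rightarrow> 'k \<Rightarrow> 't set) \<Rightarrow> 'k \<Rightarrow> 'n \<times> 'n \<Rightarrow> 't \<times> 't \<Rightarrow> ('t \<times> 't) set" where
  "label_ext tplus k w l = (case w of (na, nb) \<Rightarrow> case l of (t1, t2) \<Rightarrow>
     if na \<noteq> nb then {(t, t2) | t. t \<in> tplus t1 k}
     else {(t, t2) | t. t \<in> tplus t1 k} \<union> {(t, t1) | t. t \<in> tplus t2 k})"

end

theory Submission
  imports Defs
begin

text \<open>
  A label dominating another one has both resources at least as large, possibly after swapping
  its two routes when they end at the same node. Enlarging a resource can only enlarge the maximal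
  intervals of its intersection with the units of the new link, so every trait obtained by extending
  a route of the dominated label is matched by one, with at least its resource, obtained by extending
  the corresponding route of the dominating label. The cost hypothesis transfers the cost comparison,
  and the resulting comparison without swaps implies dominance at any vertex.
\<close>

lemma int_interval_finite: "int_interval J \<Longrightarrow> finite J"
  unfolding int_interval_def by auto

lemma max_interval_in_exists:
  assumes "int_interval I" "I \<subseteq> S" "finite S"
  shows "\<exists>J. max_interval_in J S \<and> I \<subseteq> J"
proof -
  let ?P = "\<lambda>J. int_interval J \<and> I \<subseteq> J \<and> J \<subseteq> S"
  have bounded: "\<forall>J. ?P J \<longrightarrow> card J < card S + 1"
    using assms(3) by (auto intro: card_mono le_imp_less_Suc)
  obtain J where J: "?P J" and greatest: "\<And>J'. ?P J' \<Longrightarrow> card J' \<le> card J"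
    using ex_has_greatest_nat[of ?P I card "card S + 1"] assms(1,2) bounded by blast
  have "max_interval_in J S"
    unfolding max_interval_in_def
  proof (intro conjI allI impI)
    fix J' assume J': "int_interval J' \<and> J \<subseteq> J' \<and> J' \<subseteq> S"
    with J have "card J' \<le> card J" by (intro greatest) auto
    with J' show "J' = J" using card_seteq int_interval_finite by blast
  qed (use J in auto)
  with J show ?thesis by blast
qed

definition label_covers :: "('t \<Rightarrow> int set) \<Rightarrow> 't \<times> 't \<Rightarrow> 't \<times> 't \<Rightarrow> bool" where
  "label_covers RI l1 l2 \<longleftrightarrow> RI (fst l2) \<subseteq> RI (fst l1) \<and> RI (snd l2) \<subseteq> RI (snd l1)"

lemma label_covers_swap [simp]:
  "label_covers RI (prod.swap l1) (prod.swap l2) \<longleftrightarrow> label_covers RI l1 l2"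
  unfolding label_covers_def by auto

lemma dom_neq_iff: "dom_neq cost RI l1 l2 \<longleftrightarrow> cost l1 \<le> cost l2 \<and> label_covers RI l1 l2"
  unfolding dom_neq_def label_covers_def by (auto split: prod.splits)

lemma dom_eq_iff:
  "dom_eq cost RI l1 l2 \<longleftrightarrow>
     cost l1 \<le> cost l2 \<and> (label_covers RI l1 l2 \<or> label_covers RI (prod.swap l1) l2)"
  unfolding dom_eq_def label_covers_def by (auto split: prod.splits)

lemma dom_at_cost_le: "dom_at cost RI v l1 l2 \<Longrightarrow> cost l1 \<le> cost l2"
  unfolding dom_at_def dom_neq_iff dom_eq_iff by (auto split: if_splits)

lemma dom_neq_imp_dom_at: "dom_neq cost RI l1 l2 \<Longrightarrow> dom_at cost RI v l1 l2"
  unfolding dom_at_def dom_neq_iff dom_eq_iff by auto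

definition extend_first :: "('t \<Rightarrow> 'k \<Rightarrow> 't set) \<Rightarrow> 'k \<Rightarrow> 't \<times> 't \<Rightarrow> ('t \<times> 't) set" where
  "extend_first tplus k l = {(t, snd l) | t. t \<in> tplus (fst l) k}"

lemma label_ext_eq:
  "label_ext tplus k (na, nb) l =
     (if na \<noteq> nb then extend_first tplus k l
      else extend_first tplus k l \<union> extend_first tplus k (prod.swap l))"
  unfolding label_ext_def extend_first_def by (auto split: prod.splits)

locale trait_model =
  fixes A :: "'k \<Rightarrow> int set"
    and RI :: "'t \<Rightarrow> int set"
    and tplus :: "'t \<Rightarrow> 'k \<Rightarrow> 't set"
  assumes RI_interval: "\<And>t. int_interval (RI t)"
    and tplus_sound: "\<And>t k t'. t' \<in> tplus t k \<Longrightarrow> max_interval_in (RI t') (RI t \<inter> A k)"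
    and tplus_complete: "\<And>t k J. max_interval_in J (RI t \<inter> A k) \<Longrightarrow> \<exists>t' \<in> tplus t k. RI t' = J"
begin

lemma tplus_covered:
  assumes "RI c \<subseteq> RI a" "t \<in> tplus c k"
  shows "\<exists>t' \<in> tplus a k. RI t \<subseteq> RI t'"
proof -
  have "RI t \<subseteq> RI a \<inter> A k"
    using tplus_sound[OF assms(2)] assms(1) unfolding max_interval_in_def by auto
  moreover have "finite (RI a \<inter> A k)"
    using int_interval_finite[OF RI_interval] by blast
  ultimately obtain J where "max_interval_in J (RI a \<inter> A k)" "RI t \<subseteq> J"
    using max_interval_in_exists RI_interval by blast
  then show ?thesis using tplus_complete by blast
qed

lemma extend_first_covered:
  assumes "label_covers RI l1 l2" "l \<in> extend_first tplus k l2"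
  shows "\<exists>l' \<in> extend_first tplus k l1. label_covers RI l' l"
proof -
  obtain t where t: "t \<in> tplus (fst l2) k" "l = (t, snd l2)"
    using assms(2) unfolding extend_first_def by auto
  obtain t' where "t' \<in> tplus (fst l1) k" "RI t \<subseteq> RI t'"
    using tplus_covered[OF _ t(1)] assms(1) unfolding label_covers_def by blast
  then have "(t', snd l1) \<in> extend_first tplus k l1" "label_covers RI (t', snd l1) l"
    using assms(1) t(2) unfolding extend_first_def label_covers_def by auto
  then show ?thesis by blast
qed

lemma label_ext_covered:
  assumes "dom_at cost RI (na, nb) li lj" "l \<in> label_ext tplus k (na, nb) lj"
  shows "\<exists>l' \<in> label_ext tplus k (na, nb) li. label_covers RI l' l"
proof (cases "na = nb")
  case False
  with assms have "label_covers RI li lj" "l \<in> extend_first tplus k lj"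
    unfolding dom_at_def dom_neq_iff label_ext_eq by auto
  with False show ?thesis
    using extend_first_covered unfolding label_ext_eq by auto
next
  case True
  from assms True have covers: "label_covers RI li lj \<or> label_covers RI (prod.swap li) lj"
    and extended: "l \<in> extend_first tplus k lj \<or> l \<in> extend_first tplus k (prod.swap lj)"
    unfolding dom_at_def dom_eq_iff label_ext_eq by auto
  have "label_covers RI (prod.swap li) (prod.swap lj) \<longleftrightarrow> label_covers RI li lj"
    "label_covers RI li (prod.swap lj) \<longleftrightarrow> label_covers RI (prod.swap li) lj"
    using label_covers_swap[of RI li lj] label_covers_swap[of RI "prod.swap li" lj] by simp_all
  with covers extended obtain m n where
    "m \<in> {li, prod.swap li}" "label_covers RI m n" "l \<in> extend_first tplus k n"
    by blast
  then obtain l' where "l' \<in> extend_first tplus k m" "label_covers RI l' l"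
    using extend_first_covered by blast
  with \<open>m \<in> {li, prod.swap li}\<close> True show ?thesis
    unfolding label_ext_eq by auto
qed

end

theorem proposition7:
  fixes A :: "'k \<Rightarrow> int set"
    and RI :: "'t \<Rightarrow> int set"
    and tplus :: "'t \<Rightarrow> 'k \<Rightarrow> 't set"
    and cost :: "'t \<times> 't \<Rightarrow> real"
    and na nb nc :: 'n
    and k :: 'k
    and Lw :: "('t \<times> 't) set"
  assumes RI_interval: "\<And>t. int_interval (RI t)"
    and tplus_sound: "\<And>t k t'. t' \<in> tplus t k \<Longrightarrow> max_interval_in (RI t') (RI t \<inter> A k)"
    and tplus_complete: "\<And>t k J. max_interval_in J (RI t \<inter> A k) \<Longrightarrow> \<exists>t' \<in> tplus t k. RI t' = J"
    and nc_ne: "nc \<noteq> na"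
    and cost_mono: "\<And>li lj l' l. li \<in> Lw \<Longrightarrow> lj \<in> Lw \<Longrightarrow> cost li \<le> cost lj \<Longrightarrow>
        l' \<in> label_ext tplus k (na, nb) li \<Longrightarrow> l \<in> label_ext tplus k (na, nb) lj \<Longrightarrow> cost l' \<le> cost l"
  shows "\<forall>li \<in> Lw. \<forall>lj \<in> Lw. dom_at cost RI (na, nb) li lj \<longrightarrow>
           (\<forall>l \<in> label_ext tplus k (na, nb) lj. \<exists>l' \<in> label_ext tplus k (na, nb) li.
              dom_at cost RI (nc, nb) l' l)"
proof (intro ballI impI)
  interpret trait_model A RI tplus
    using RI_interval tplus_sound tplus_complete by unfold_locales
  fix li lj l
  assume li: "li \<in> Lw" and lj: "lj \<in> Lw" and dom: "dom_at cost RI (na, nb) li lj"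
    and l: "l \<in> label_ext tplus k (na, nb) lj"
  obtain l' where l': "l' \<in> label_ext tplus k (na, nb) li" "label_covers RI l' l"
    using label_ext_covered[OF dom l] by blast
  have "cost l' \<le> cost l"
    using cost_mono[OF li lj dom_at_cost_le[OF dom] l'(1) l] .
  with l' show "\<exists>l' \<in> label_ext tplus k (na, nb) li. dom_at cost RI (nc, nb) l' l"
    using dom_neq_imp_dom_at dom_neq_iff by blast
qed

end
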